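(* Let $\sigma_{10}=\frac{1+\sqrt5}{2}$. For $p\in\{4,5,10\}$, the group $\Gamma=\mathcal{S}(p,\sigma_{10})$ is generated by $\mathrm{Stab}_\Gamma(m(R_1))\cup\mathrm{Stab}_\Gamma(m(A))$ where $A$ is either $(R_1R_2)^5$ or $(R_1R_3)^5$. For $p=10$, $\Gamma$ is also generated by $\mathrm{Stab}_\Gamma(m(R_1))\cup\mathrm{Stab}_\Gamma(m(A))$ where $A$ is either $(R_1R_2R_3R_2^{-1})^3$ or $(R_1R_3^{-1}R_2R_3)^3$.
   Context: Let $p\ge2$ be an integer and $\tau\in\mathbb{C}$. Set $u=e^{2\pi i/(3p)}$, $\alpha=2-u^3-\bar u^3$, $\beta=(\bar u^2-u)\tau$ and $H=\begin{pmatrix}\alpha&\beta&\bar\beta\\ \bar\beta&\alpha&\beta\\ \beta&\bar\beta&\alpha\end{pmatrix}$, a Hermitian matrix (of signature $(2,1)$ for the parameters considered) defining the form $\langle X,Y\rangle=Y^*HX$. Let $R_1=\begin{pmatrix}u^2&\tau&-u\bar\tau\\0&\bar u&0\\0&0&\bar u\end{pmatrix}$, $J=\begin{pmatrix}0&0&1\\1&0&0\\0&1&0\end{pmatrix}$, $R_2=JR_1J^{-1}$, $R_3=JR_2J^{-1}$. The group $\mathcal{S}(p,\tau)$ is the subgroup of $U(H)$ generated by $R_1$ and $J$, acting on $H^2_{\mathbb{C}}=\{[X]:\langle X,X\rangle<0\}$ through its image in $PU(H)$; all statements refer to this image. The elements $R_1$ and the listed $A$ are complex reflections (non-identity elements fixing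 pointwise a complex line) in the relevant groups; $m(A)$ denotes the mirror (fixed complex line) of $A$, and $\mathrm{Stab}_\Gamma(m)$ is the setwise stabilizer of $m$ in $\Gamma$. *)

theory Defs
  imports "HOL-Analysis.Analysis"
begin

type_synonym cmat = "complex^3^3"
type_synonym cvec = "complex^3"

definition mat3 :: "complex \<Rightarrow> complex \<Rightarrow> complex \<Rightarrow> complex \<Rightarrow> complex \<Rightarrow> complex
   \<Rightarrow> complex \<Rightarrow> complex \<Rightarrow> complex \<Rightarrow> cmat" where
  "mat3 a b c d e f g h k = vector [vector [a,b,c], vector [d,e,f], vector [g,h,k]]"

definition uu :: "nat \<Rightarrow> complex" where
  "uu p = exp (2 * pi * \<i> / of_nat (3 * p))"

definition alph :: "nat \<Rightarrow> complex" where
  "alph p = 2 - (uu p)^3 - cnj ((uu p)^3)"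

definition bet :: "nat \<Rightarrow> complex \<Rightarrow> complex" where
  "bet p \<tau> = ((cnj (uu p))^2 - uu p) * \<tau>"

definition Hmat :: "nat \<Rightarrow> complex \<Rightarrow> cmat" where
  "Hmat p \<tau> = mat3 (alph p) (bet p \<tau>) (cnj (bet p \<tau>))
                    (cnj (bet p \<tau>)) (alph p) (bet p \<tau>)
                    (bet p \<tau>) (cnj (bet p \<tau>)) (alph p)"

definition herm :: "cmat \<Rightarrow> cvec \<Rightarrow> cvec \<Rightarrow> complex" where
  "herm H X Y = (\<Sum>i\<in>UNIV. \<Sum>j\<in>UNIV. cnj (Y$i) * (H$i$j) * (X$j))"

definition R1 :: "nat \<Rightarrow> complex \<Rightarrow> cmat" where
  "R1 p \<tau> = mat3 ((uu p)^2) \<tau> (- uu p * cnj \<tau>)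
                  0 (cnj (uu p)) 0
                  0 0 (cnj (uu p))"

definition Jm :: cmat where
  "Jm = mat3 0 0 1  1 0 0  0 1 0"

definition R2 :: "nat \<Rightarrow> complex \<Rightarrow> cmat" where
  "R2 p \<tau> = Jm ** R1 p \<tau> ** matrix_inv Jm"

definition R3 :: "nat \<Rightarrow> complex \<Rightarrow> cmat" where
  "R3 p \<tau> = Jm ** R2 p \<tau> ** matrix_inv Jm"

fun mpow :: "cmat \<Rightarrow> nat \<Rightarrow> cmat" where
  "mpow A 0 = mat 1"
| "mpow A (Suc n) = A ** mpow A n"

inductive_set gen_group :: "cmat set \<Rightarrow> cmat set" for S where
  one: "mat 1 \<in> gen_group S"
| mul: "s \<in> S \<Longrightarrow> g \<in> gen_group S \<Longrightarrow> s ** g \<in> gen_group S"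
| mulinv: "s \<in> S \<Longrightarrow> g \<in> gen_group S \<Longrightarrow> matrix_inv s ** g \<in> gen_group S"

text \<open>Mirror of A in complex hyperbolic space (as the cone of negative vectors
  representing points of H^2_C fixed by A in the projective action).\<close>
definition mirror :: "cmat \<Rightarrow> cmat \<Rightarrow> cvec set" where
  "mirror H A = {X. Re (herm H X X) < 0 \<and> (\<exists>c. A *v X = c *s X)}"

definition Stab :: "cmat set \<Rightarrow> cvec set \<Rightarrow> cmat set" where
  "Stab G m = {g \<in> G. (\<lambda>X. g *v X) ` m = m}"

text \<open>S generates G in the projective group PU(H): every element of G agrees up to a
  nonzero scalar with an element of the group generated by S.\<close>
definition proj_generates :: "cmat set \<Rightarrow> cmat set \<Rightarrow> bool" where
  "proj_generates G S \<longleftrightarrow> (\<forall>g\<in>G. \<exists>h\<in>gen_group S. \<exists>c. c \<noteq> 0 \<and> g = mat c ** h)"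

definition sigma10 :: complex where
  "sigma10 = of_real ((1 + sqrt 5) / 2)"

end

(*
  R1 stabilises its own mirror, and J has order 3, so the stabilisers of m(R1) and m(A) generate
  the projective image of Gamma = <R1, J> as soon as J is, up to a scalar, a product of elements of
  Gamma each of which commutes with R1 or with A. Such an element g is unitary for H and maps every
  negative eigenvector of A to a negative eigenvector of A with the same eigenvalue; hence g
  preserves the mirror m(A). The factorisations of J are verified by exact computation: all
  entries lie in Z[u, sigma10] with u = exp(2 pi i/(3p)), which is computed modulo the
  cyclotomic polynomial of u and sigma10^2 = sigma10 + 1.
*)
theory Submission
  imports Defs
begin

lemma mat3_mult:
  "mat3 a b c d e f g h k ** mat3 a' b' c' d' e' f' g' h' k' =
   mat3 (a*a' + b*d' + c*g') (a*b' + b*e' + c*h') (a*c' + b*f' + c*k')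
        (d*a' + e*d' + f*g') (d*b' + e*e' + f*h') (d*c' + e*f' + f*k')
        (g*a' + h*d' + k*g') (g*b' + h*e' + k*h') (g*c' + h*f' + k*k')"
  unfolding mat3_def by (simp add: vec_eq_iff forall_3 matrix_matrix_mult_def sum_3)

lemma mat3_eq_iff:
  "mat3 a b c d e f g h k = mat3 a' b' c' d' e' f' g' h' k' \<longleftrightarrow>
   a = a' \<and> b = b' \<and> c = c' \<and> d = d' \<and> e = e' \<and> f = f' \<and> g = g' \<and> h = h' \<and> k = k'"
  unfolding mat3_def by (simp add: vec_eq_iff forall_3)

lemma mat_eq_mat3: "mat c = mat3 c 0 0 0 c 0 0 0 c"
  unfolding mat3_def by (simp add: vec_eq_iff forall_3 mat_def)

lemma mat_mult_left_nth: "(mat c ** A) $ i $ j = c * (A $ i $ j :: 'a::semiring_1)"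
  unfolding matrix_matrix_mult_def mat_def
  by (auto simp: if_distrib if_distribR sum.delta[OF finite] cong: if_cong)

lemma mat_mult_right_nth: "(A ** mat c) $ i $ j = (A $ i $ j :: 'a::semiring_1) * c"
  unfolding matrix_matrix_mult_def mat_def
  by (auto simp: if_distrib if_distribR sum.delta'[OF finite] cong: if_cong)

lemma mat_mult_commute: "mat c ** A = A ** (mat c :: 'a::comm_semiring_1^'n^'n)"
  by (simp add: vec_eq_iff mat_mult_left_nth mat_mult_right_nth mult.commute)

lemma mat_mult_mat: "mat c ** mat d = (mat (c * d) :: 'a::comm_semiring_1^'n^'n)"
  by (simp add: vec_eq_iff mat_mult_left_nth) (simp add: mat_def)

definition conj_transpose :: "cmat \<Rightarrow> cmat" where
  "conj_transpose A = (\<chi> i j. cnj (A $ j $ i))"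

lemma conj_transpose_mat3:
  "conj_transpose (mat3 a b c d e f g h k) =
   mat3 (cnj a) (cnj d) (cnj g) (cnj b) (cnj e) (cnj h) (cnj c) (cnj f) (cnj k)"
  unfolding conj_transpose_def mat3_def by (simp add: vec_eq_iff forall_3)

lemma conj_transpose_mult: "conj_transpose (A ** B) = conj_transpose B ** conj_transpose A"
  unfolding conj_transpose_def by (simp add: vec_eq_iff matrix_matrix_mult_def mult.commute)

lemma conj_transpose_one [simp]: "conj_transpose (mat 1) = mat 1"
  unfolding conj_transpose_def by (simp add: vec_eq_iff mat_def)

lemma herm_mult: "herm H (g *v X) (g *v Y) = herm (conj_transpose g ** H ** g) X Y"
  unfolding herm_def conj_transpose_def matrix_vector_mult_def matrix_matrix_mult_def
  by (simp add: sum_3 algebra_simps)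

lemma matrix_inv_unique:
  fixes A B :: "'a::semiring_1^'n^'n"
  assumes "A ** B = mat 1" "B ** A = mat 1"
  shows "matrix_inv A = B"
proof -
  have "A ** matrix_inv A = mat 1 \<and> matrix_inv A ** A = mat 1"
    unfolding matrix_inv_def using assms by (rule someI[of _ B, OF conjI])
  then have "matrix_inv A = matrix_inv A ** (A ** B)"
    using assms by simp
  also have "\<dots> = B"
    using \<open>A ** matrix_inv A = mat 1 \<and> matrix_inv A ** A = mat 1\<close> by (simp add: matrix_mul_assoc)
  finally show ?thesis .
qed

lemma matrix_inv_mult_cancel:
  fixes A :: "'a::semiring_1^'n^'n"
  assumes "invertible A"
  shows "A ** matrix_inv A = mat 1" and "matrix_inv A ** A = mat 1"
  using assms matrix_inv_unique unfolding invertible_def by blast+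

lemma invertible_matrix_inv:
  fixes A :: "'a::semiring_1^'n^'n"
  shows "invertible A \<Longrightarrow> invertible (matrix_inv A)"
  using matrix_inv_mult_cancel unfolding invertible_def by blast

lemma mult_matrix_inv_mult_cancel:
  fixes A B :: "'a::semiring_1^'n^'n"
  assumes "invertible A" "invertible B"
  shows "(A ** B) ** (matrix_inv B ** matrix_inv A) = mat 1"
    and "(matrix_inv B ** matrix_inv A) ** (A ** B) = mat 1"
proof -
  have "(A ** B) ** (matrix_inv B ** matrix_inv A) = A ** (B ** matrix_inv B) ** matrix_inv A"
    "(matrix_inv B ** matrix_inv A) ** (A ** B) = matrix_inv B ** (matrix_inv A ** A) ** B"
    by (simp_all only: matrix_mul_assoc)
  then show "(A ** B) ** (matrix_inv B ** matrix_inv A) = mat 1"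
    and "(matrix_inv B ** matrix_inv A) ** (A ** B) = mat 1"
    using matrix_inv_mult_cancel[OF assms(1)] matrix_inv_mult_cancel[OF assms(2)] by simp_all
qed

lemma invertible_mult:
  fixes A B :: "'a::semiring_1^'n^'n"
  shows "invertible A \<Longrightarrow> invertible B \<Longrightarrow> invertible (A ** B)"
  using mult_matrix_inv_mult_cancel unfolding invertible_def by blast

lemma matrix_inv_mult:
  fixes A B :: "'a::semiring_1^'n^'n"
  shows "invertible A \<Longrightarrow> invertible B \<Longrightarrow> matrix_inv (A ** B) = matrix_inv B ** matrix_inv A"
  using mult_matrix_inv_mult_cancel by (blast intro: matrix_inv_unique)

lemma matrix_inv_matrix_inv:
  fixes A :: "'a::semiring_1^'n^'n"
  shows "invertible A \<Longrightarrow> matrix_inv (matrix_inv A) = A"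
  using matrix_inv_mult_cancel by (blast intro: matrix_inv_unique)

section \<open>Mirror stabilisers and projective generation\<close>

definition unitary_group :: "cmat \<Rightarrow> cmat set" where
  "unitary_group H = {g. invertible g \<and> conj_transpose g ** H ** g = H}"

lemma unitary_group_mult:
  assumes "g \<in> unitary_group H" "h \<in> unitary_group H"
  shows "g ** h \<in> unitary_group H"
proof -
  have "conj_transpose (g ** h) ** H ** (g ** h) = conj_transpose h ** (conj_transpose g ** H ** g) ** h"
    by (simp add: conj_transpose_mult matrix_mul_assoc)
  then show ?thesis using assms by (simp add: unitary_group_def invertible_mult)
qed

lemma unitary_group_matrix_inv:
  assumes "g \<in> unitary_group H"
  shows "matrix_inv g \<in> unitary_group H"
proof -
  let ?g' = "matrix_inv g"
  have inv: "g ** ?g' = mat 1" "invertible g" "conj_transpose g ** H ** g = H"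
    using assms matrix_inv_mult_cancel by (auto simp: unitary_group_def)
  have "conj_transpose ?g' ** H ** ?g' = conj_transpose ?g' ** (conj_transpose g ** H ** g) ** ?g'"
    using inv(3) by simp
  also have "\<dots> = conj_transpose (g ** ?g') ** H ** (g ** ?g')"
    by (simp add: conj_transpose_mult matrix_mul_assoc)
  finally show ?thesis using inv by (simp add: unitary_group_def invertible_matrix_inv)
qed

lemma mat_1_in_unitary_group: "mat 1 \<in> unitary_group H"
  by (auto simp: unitary_group_def invertible_def)

lemma gen_group_subset_unitary_group:
  assumes "S \<subseteq> unitary_group H"
  shows "gen_group S \<subseteq> unitary_group H"
proof
  fix g assume "g \<in> gen_group S"
  then show "g \<in> unitary_group H"
    by induction
      (use assms in \<open>auto intro: unitary_group_mult unitary_group_matrix_inv mat_1_in_unitary_group\<close>)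
qed

lemma gen_group_base: "s \<in> S \<Longrightarrow> s \<in> gen_group S"
  using gen_group.mul[OF _ gen_group.one] by fastforce

lemma gen_group_inverse: "s \<in> S \<Longrightarrow> matrix_inv s \<in> gen_group S"
  using gen_group.mulinv[OF _ gen_group.one] by fastforce

lemma gen_group_mult: "g \<in> gen_group S \<Longrightarrow> h \<in> gen_group S \<Longrightarrow> g ** h \<in> gen_group S"
  by (induction g rule: gen_group.induct)
    (auto simp: matrix_mul_assoc[symmetric] intro: gen_group.intros)

lemma unitary_commuting_maps_mirror:
  assumes "g \<in> unitary_group H" "g ** A = A ** g" "X \<in> mirror H A"
  shows "g *v X \<in> mirror H A"
proof -
  obtain c where c: "A *v X = c *s X" and neg: "Re (herm H X X) < 0"
    using assms(3) by (auto simp: mirror_def)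
  have "herm H (g *v X) (g *v X) = herm H X X"
    using assms(1) by (simp add: herm_mult unitary_group_def)
  moreover have "A *v (g *v X) = c *s (g *v X)"
    by (metis assms(2) c matrix_vector_mul_assoc vector_scalar_commute)
  ultimately show ?thesis using neg by (auto simp: mirror_def)
qed

lemma unitary_commuting_in_Stab_mirror:
  assumes "g \<in> G" "g \<in> unitary_group H" "g ** A = A ** g"
  shows "g \<in> Stab G (mirror H A)"
proof -
  let ?g' = "matrix_inv g"
  have inv: "g ** ?g' = mat 1" "?g' ** g = mat 1"
    using assms(2) matrix_inv_mult_cancel by (auto simp: unitary_group_def)
  have "?g' ** A = ?g' ** (A ** g) ** ?g'"
    by (simp add: matrix_mul_assoc[symmetric] inv)
  also have "\<dots> = (?g' ** g) ** A ** ?g'"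
    by (simp add: assms(3)[symmetric] matrix_mul_assoc)
  also have "\<dots> = A ** ?g'"
    by (simp add: inv)
  finally have comm': "?g' ** A = A ** ?g'" .
  have "mirror H A \<subseteq> (\<lambda>X. g *v X) ` mirror H A"
  proof
    fix X assume "X \<in> mirror H A"
    then have "?g' *v X \<in> mirror H A"
      using unitary_commuting_maps_mirror[OF unitary_group_matrix_inv[OF assms(2)] comm'] by blast
    moreover have "X = g *v (?g' *v X)"
      by (simp add: matrix_vector_mul_assoc inv)
    ultimately show "X \<in> (\<lambda>X. g *v X) ` mirror H A" by blast
  qed
  then show ?thesis
    using assms unitary_commuting_maps_mirror[OF assms(2,3)] by (auto simp: Stab_def)
qed

definition proj_in_gen_group :: "cmat set \<Rightarrow> cmat \<Rightarrow> bool" where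
  "proj_in_gen_group S g \<longleftrightarrow> (\<exists>h\<in>gen_group S. \<exists>c. c \<noteq> 0 \<and> g = mat c ** h)"

lemma proj_in_gen_group_base: "g \<in> gen_group S \<Longrightarrow> proj_in_gen_group S g"
  unfolding proj_in_gen_group_def by (rule bexI[of _ g]) (auto intro: exI[of _ 1])

lemma proj_in_gen_group_mult:
  assumes "proj_in_gen_group S g" "proj_in_gen_group S h"
  shows "proj_in_gen_group S (g ** h)"
proof -
  obtain g' c h' d where g': "g' \<in> gen_group S" "c \<noteq> 0" "g = mat c ** g'"
    and h': "h' \<in> gen_group S" "d \<noteq> 0" "h = mat d ** h'"
    using assms unfolding proj_in_gen_group_def by blast
  have "g ** h = mat c ** (g' ** mat d) ** h'"
    by (simp add: g'(3) h'(3) matrix_mul_assoc)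
  also have "\<dots> = mat (c * d) ** (g' ** h')"
    by (subst mat_mult_commute[of d g', symmetric]) (simp only: matrix_mul_assoc mat_mult_mat)
  finally have "g ** h = mat (c * d) ** (g' ** h')" .
  then show ?thesis
    unfolding proj_in_gen_group_def using g'(2) h'(2)
    by (intro bexI[OF _ gen_group_mult[OF g'(1) h'(1)]] exI[of _ "c * d"]) simp
qed

lemma proj_generates_gen_group:
  assumes "\<And>t. t \<in> T \<Longrightarrow> proj_in_gen_group S t \<and> proj_in_gen_group S (matrix_inv t)"
  shows "proj_generates (gen_group T) S"
proof -
  have "proj_in_gen_group S g" if "g \<in> gen_group T" for g
    using that
  proof induction
    case one
    show ?case by (intro proj_in_gen_group_base gen_group.one)
  next
    case (mul t g)
    then show ?case using assms by (blast intro: proj_in_gen_group_mult)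
  next
    case (mulinv t g)
    then show ?case using assms by (blast intro: proj_in_gen_group_mult)
  qed
  then show ?thesis
    unfolding proj_generates_def proj_in_gen_group_def by blast
qed

datatype letter = LR1 | LR1_inv | LJ | LJ_inv

fun letter_mat :: "cmat \<Rightarrow> cmat \<Rightarrow> letter \<Rightarrow> cmat" where
  "letter_mat a j LR1 = a"
| "letter_mat a j LR1_inv = matrix_inv a"
| "letter_mat a j LJ = j"
| "letter_mat a j LJ_inv = matrix_inv j"

definition word_mat :: "cmat \<Rightarrow> cmat \<Rightarrow> letter list \<Rightarrow> cmat" where
  "word_mat a j w = foldr (\<lambda>l m. letter_mat a j l ** m) w (mat 1)"

lemma word_mat_Nil [simp]: "word_mat a j [] = mat 1"
  by (simp add: word_mat_def)

lemma word_mat_Cons [simp]: "word_mat a j (l # w) = letter_mat a j l ** word_mat a j w"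
  by (simp add: word_mat_def)

lemma word_mat_append: "word_mat a j (v @ w) = word_mat a j v ** word_mat a j w"
  by (induction v) (simp_all add: matrix_mul_assoc)

lemma word_mat_in_gen_group: "word_mat a j w \<in> gen_group {a, j}"
proof (induction w)
  case Nil
  show ?case by (simp add: gen_group.one)
next
  case (Cons l w)
  then show ?case
    by (cases l) (auto intro: gen_group.mul gen_group.mulinv)
qed

lemma word_mat_concat_in_gen_group:
  assumes "\<And>w. w \<in> set ws \<Longrightarrow> word_mat a j w \<in> S"
  shows "word_mat a j (concat ws) \<in> gen_group S"
  using assms
  by (induction ws) (auto simp: word_mat_append intro: gen_group_mult gen_group_base gen_group.one)

lemma proj_generates_by_commuting_words:
  fixes a j A H :: cmat
  defines "\<Gamma> \<equiv> gen_group {a, j}"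
  assumes unitary: "a \<in> unitary_group H" "j \<in> unitary_group H"
    and j_order_3: "matrix_inv j = j ** j"
    and j_word: "c \<noteq> 0" "j = mat c ** word_mat a j (concat ws)"
    and commuting: "\<And>w. w \<in> set ws \<Longrightarrow>
      word_mat a j w ** a = a ** word_mat a j w \<or> word_mat a j w ** A = A ** word_mat a j w"
  shows "proj_generates \<Gamma> (Stab \<Gamma> (mirror H a) \<union> Stab \<Gamma> (mirror H A))"
proof -
  define S where "S = Stab \<Gamma> (mirror H a) \<union> Stab \<Gamma> (mirror H A)"
  have in_S: "g \<in> S" if "g \<in> \<Gamma>" "g ** a = a ** g \<or> g ** A = A ** g" for g
  proof -
    have "g \<in> unitary_group H"
      using that(1) gen_group_subset_unitary_group[of "{a, j}"] unitary by (auto simp: \<Gamma>_def)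
    then show ?thesis
      using that unitary_commuting_in_Stab_mirror by (auto simp: S_def)
  qed
  have "word_mat a j (concat ws) \<in> gen_group S"
    using commuting by (intro word_mat_concat_in_gen_group in_S) (simp_all add: \<Gamma>_def word_mat_in_gen_group)
  then have j: "proj_in_gen_group S j"
    using j_word unfolding proj_in_gen_group_def by blast
  have "invertible a"
    using unitary(1) by (simp add: unitary_group_def)
  then have a_inv: "matrix_inv a ** a = a ** matrix_inv a"
    by (simp add: matrix_inv_mult_cancel)
  have "a \<in> S" "matrix_inv a \<in> S"
    using a_inv by (auto intro!: in_S simp: \<Gamma>_def gen_group_base gen_group_inverse)
  then have "proj_generates \<Gamma> S"
    unfolding \<Gamma>_def using j j_order_3
    by (intro proj_generates_gen_group) (auto intro: proj_in_gen_group_base gen_group_base proj_in_gen_group_mult)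
  then show ?thesis by (simp add: S_def)
qed

section \<open>The generators R1 and J\<close>

lemma uu_pow: "uu p ^ k = exp (of_nat k * (2 * pi * \<i> / of_nat (3 * p)))"
  unfolding uu_def by (rule exp_of_nat_mult[symmetric])

lemma uu_pow_order: "0 < p \<Longrightarrow> uu p ^ (3 * p) = 1"
proof -
  assume "0 < p"
  then have "of_nat (3 * p) * (2 * of_real pi * \<i> / of_nat (3 * p)) = (2 * of_real pi * \<i> :: complex)"
    by (simp del: of_nat_mult)
  then show ?thesis unfolding uu_pow by simp
qed

lemma uu_pow_neq_1:
  assumes "0 < k" "k < 3 * p"
  shows "uu p ^ k \<noteq> 1"
proof
  assume "uu p ^ k = 1"
  then obtain n :: int where "Im (of_nat k * (2 * pi * \<i> / of_nat (3 * p))) = of_int (2 * n) * pi"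
    unfolding uu_pow exp_eq_1 by blast
  then have "real k * (2 * pi) / real (3 * p) = 2 * real_of_int n * pi" by simp
  then have "real k = real_of_int n * real (3 * p)" using assms by (simp add: field_simps)
  then have "int k = n * int (3 * p)" by (metis of_int_eq_iff of_int_mult of_int_of_nat_eq)
  then have "int (3 * p) dvd int k" by (metis dvd_triv_right)
  then have "3 * p dvd k" by (simp only: of_nat_dvd_iff)
  then show False using assms by (auto dest: dvd_imp_le)
qed

lemma norm_uu [simp]: "cmod (uu p) = 1"
  unfolding uu_def by (simp add: norm_exp_eq_Re)

lemma uu_nonzero [simp]: "uu p \<noteq> 0"
  unfolding uu_def by simp

lemma uu_mult_cnj_uu [simp]: "uu p * cnj (uu p) = 1"
  using complex_norm_square[of "uu p"] by simp

lemma cnj_uu_mult_uu [simp]: "cnj (uu p) * uu p = 1"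
  using uu_mult_cnj_uu by (simp add: mult.commute)

lemma cnj_uu_pow:
  assumes "0 < p" "k \<le> 3 * p"
  shows "cnj (uu p ^ k) = uu p ^ (3 * p - k)"
proof -
  have "cnj (uu p ^ k) * uu p ^ k = 1"
    by (simp flip: power_mult_distrib)
  moreover have "uu p ^ (3 * p - k) * uu p ^ k = 1"
    using uu_pow_order[OF assms(1)] assms(2) by (simp flip: power_add)
  ultimately show ?thesis by (metis mult_right_cancel power_not_zero uu_nonzero)
qed

text \<open>With \<open>v = cnj u\<close> and \<open>t' = cnj t\<close> this is \<open>R1\<^sup>* H R1 = H\<close>; only \<open>u v = 1\<close> is needed.\<close>

lemma reflection_preserves_form_identity:
  fixes u v t t' :: complex
  assumes "u * v = 1"
  defines "a \<equiv> 2 - u^3 - v^3" and "b \<equiv> (v^2 - u) * t" and "b' \<equiv> (u^2 - v) * t'"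
  shows "mat3 (v^2) 0 0 t' u 0 (- v * t) 0 u ** mat3 a b b' b' a b b b' a
           ** mat3 (u^2) t (- u * t') 0 v 0 0 0 v
       = mat3 a b b' b' a b b b' a"
  unfolding mat3_mult mat3_eq_iff a_def b_def b'_def using assms by algebra

lemma R1_mult_inverse:
  fixes p :: nat and \<tau> :: complex
  defines "R' \<equiv> mat3 (cnj (uu p) ^ 2) (- cnj (uu p) * \<tau>) (cnj \<tau>) 0 (uu p) 0 0 0 (uu p)"
  shows "R1 p \<tau> ** R' = mat 1" and "R' ** R1 p \<tau> = mat 1"
  using cnj_uu_mult_uu[of p]
  unfolding R1_def R'_def mat3_mult mat_eq_mat3 mat3_eq_iff by (simp_all, algebra+)

lemma invertible_R1: "invertible (R1 p \<tau>)"
  using R1_mult_inverse unfolding invertible_def by blast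

lemma matrix_inv_R1:
  "matrix_inv (R1 p \<tau>) = mat3 (cnj (uu p) ^ 2) (- cnj (uu p) * \<tau>) (cnj \<tau>) 0 (uu p) 0 0 0 (uu p)"
  using R1_mult_inverse by (rule matrix_inv_unique)

lemma R1_in_unitary_group: "R1 p \<tau> \<in> unitary_group (Hmat p \<tau>)"
proof -
  have "conj_transpose (R1 p \<tau>) ** Hmat p \<tau> ** R1 p \<tau> = Hmat p \<tau>"
    using reflection_preserves_form_identity[where u = "uu p" and v = "cnj (uu p)" and t = \<tau> and t' = "cnj \<tau>"]
    by (simp add: R1_def Hmat_def alph_def bet_def conj_transpose_mat3 mult.commute)
  then show ?thesis using invertible_R1 by (simp add: unitary_group_def)
qed

lemma Jm_cube: "Jm ** (Jm ** Jm) = mat 1" "(Jm ** Jm) ** Jm = mat 1"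
  by (simp_all add: Jm_def mat3_mult mat_eq_mat3)

lemma invertible_Jm: "invertible Jm"
  using Jm_cube unfolding invertible_def by blast

lemma matrix_inv_Jm: "matrix_inv Jm = Jm ** Jm"
  using Jm_cube by (rule matrix_inv_unique)

lemma Jm_in_unitary_group: "Jm \<in> unitary_group (Hmat p \<tau>)"
  using invertible_Jm
  by (simp add: unitary_group_def Jm_def Hmat_def conj_transpose_mat3 mat3_mult)

lemma sigma10_sq: "sigma10\<^sup>2 = sigma10 + 1"
proof -
  have "((1 + sqrt 5) / 2) ^ 2 = (1 + sqrt 5) / 2 + 1"
    by (simp add: power2_eq_square field_simps)
  then have "of_real (((1 + sqrt 5) / 2) ^ 2) = (of_real ((1 + sqrt 5) / 2 + 1) :: complex)"
    by (simp only:)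
  then show ?thesis unfolding sigma10_def by simp
qed

lemma cnj_sigma10 [simp]: "cnj sigma10 = sigma10"
  unfolding sigma10_def by simp

lemma sigma10_eq_fifth_root_sum:
  fixes z :: complex
  assumes "z ^ 5 = 1" "z \<noteq> 1" "0 < Re z" "cnj z = z ^ 4"
  shows "1 + z + z ^ 4 = sigma10"
proof -
  have "(z - 1) * (1 + z + z^2 + z^3 + z^4) = z^5 - 1"
    by (simp add: algebra_simps eval_nat_numeral)
  then have cyc5: "1 + z + z^2 + z^3 + z^4 = 0" using assms(1,2) by simp
  define t where "t = z + z ^ 4"
  have "t^2 + t - 1 = (1 + z + z^2 + z^3 + z^4) + z^3 * (z^5 - 1) + 2 * (z^5 - 1)"
    unfolding t_def by (simp add: algebra_simps power2_eq_square eval_nat_numeral)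
  then have t_root: "t^2 + t - 1 = 0" using cyc5 assms(1) by simp
  have "t = of_real (2 * Re z)" unfolding t_def using assms(4) by (metis complex_add_cnj)
  then obtain tr where tr: "t = of_real tr" "0 < tr" using assms(3) by fastforce
  then have "of_real (tr^2 + tr - 1) = (0::complex)" using t_root by simp
  then have "tr^2 + tr - 1 = 0" by (simp only: of_real_eq_0_iff)
  then have "(2 * tr + 1)^2 = (sqrt 5)^2"
    by (simp add: power2_eq_square algebra_simps)
  then have "2 * tr + 1 = sqrt 5"
    using power2_eq_iff_nonneg[of "2 * tr + 1" "sqrt 5"] tr(2) by simp
  then have "1 + tr = (1 + sqrt 5) / 2" by simp
  have "1 + z + z ^ 4 = 1 + t" by (simp add: t_def)
  also have "\<dots> = of_real (1 + tr)" using tr(1) by simp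
  also have "\<dots> = sigma10" unfolding sigma10_def \<open>1 + tr = (1 + sqrt 5) / 2\<close> ..
  finally show ?thesis .
qed

lemma sigma10_eq_uu_sum:
  assumes "5 * k = 3 * p" "0 < p"
  shows "1 + uu p ^ k + uu p ^ (4 * k) = sigma10"
proof -
  let ?z = "uu p ^ k"
  have k: "0 < k" "k < 3 * p" using assms by linarith+
  have "?z ^ 5 = 1"
    using uu_pow_order[OF assms(2)] assms(1) by (simp flip: power_mult add: mult.commute)
  moreover have "?z \<noteq> 1" using uu_pow_neq_1 k by blast
  moreover have "0 < Re ?z"
  proof -
    have "3 * real p = 5 * real k"
      using arg_cong[OF assms(1), of real] by simp
    then have angle: "real k * (2 * pi) / (3 * real p) = 2 * pi / 5"
      using k(1) by (simp add: field_simps)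
    have "Re ?z = cos (real k * (2 * pi) / (3 * real p))"
      unfolding uu_pow by (simp add: Re_exp)
    then have "Re ?z = cos (2 * pi / 5)"
      by (simp only: angle)
    moreover have "0 < cos (2 * pi / 5)"
      by (rule cos_gt_zero_pi) (simp_all add: divide_simps)
    ultimately show ?thesis by simp
  qed
  moreover have "cnj ?z = ?z ^ 4"
  proof -
    have "3 * p - k = k * 4" using assms(1) by linarith
    then show ?thesis using cnj_uu_pow[OF assms(2), of k] k by (simp add: power_mult)
  qed
  ultimately have "1 + ?z + ?z ^ 4 = sigma10" by (rule sigma10_eq_fifth_root_sum)
  then show ?thesis by (simp flip: power_mult add: mult.commute)
qed

section \<open>Exact arithmetic in cyclotomic fields\<close>

fun cf_eval :: "complex \<Rightarrow> int list \<Rightarrow> complex" where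
  "cf_eval x [] = 0"
| "cf_eval x (a # as) = of_int a + x * cf_eval x as"

fun cf_add :: "int list \<Rightarrow> int list \<Rightarrow> int list" where
  "cf_add [] bs = bs"
| "cf_add as [] = as"
| "cf_add (a # as) (b # bs) = (a + b) # cf_add as bs"

fun cf_mult :: "int list \<Rightarrow> int list \<Rightarrow> int list" where
  "cf_mult [] bs = []"
| "cf_mult (a # as) bs = cf_add (map ((*) a) bs) (0 # cf_mult as bs)"

text \<open>For \<open>n = length r\<close>, \<open>cf_times_x r\<close>
  multiplies a list of length \<open>n\<close> by \<open>x\<close> modulo \<open>x\<^sup>n - r(x)\<close>, and \<open>cf_reduce r\<close> brings
  an arbitrary list into this form.\<close>

definition cf_times_x :: "int list \<Rightarrow> int list \<Rightarrow> int list" where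
  "cf_times_x r q = cf_add (butlast (0 # q)) (map ((*) (last (0 # q))) r)"

fun cf_reduce :: "int list \<Rightarrow> int list \<Rightarrow> int list" where
  "cf_reduce r [] = replicate (length r) 0"
| "cf_reduce r (a # as) = cf_add [a] (cf_times_x r (cf_reduce r as))"

text \<open>Stripping trailing zeros makes reduced representations canonical, so that the certificates
  below can be decided by syntactic equality.\<close>

fun cf_cons :: "int \<Rightarrow> int list \<Rightarrow> int list" where
  "cf_cons a [] = (if a = 0 then [] else [a])"
| "cf_cons a (b # bs) = a # b # bs"

fun cf_strip :: "int list \<Rightarrow> int list" where
  "cf_strip [] = []"
| "cf_strip (a # as) = cf_cons a (cf_strip as)"

definition cf_normalize :: "int list \<Rightarrow> int list \<Rightarrow> int list" where
  "cf_normalize r as = cf_strip (cf_reduce r as)"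

lemma cf_eval_add [simp]: "cf_eval x (cf_add as bs) = cf_eval x as + cf_eval x bs"
  by (induction as bs rule: cf_add.induct) (simp_all add: algebra_simps)

lemma length_cf_add [simp]: "length (cf_add as bs) = max (length as) (length bs)"
  by (induction as bs rule: cf_add.induct) simp_all

lemma cf_eval_smult [simp]: "cf_eval x (map ((*) c) as) = of_int c * cf_eval x as"
  by (induction as) (simp_all add: algebra_simps)

lemma cf_eval_uminus [simp]: "cf_eval x (map uminus as) = - cf_eval x as"
  by (induction as) simp_all

lemma cf_eval_mult [simp]: "cf_eval x (cf_mult as bs) = cf_eval x as * cf_eval x bs"
  by (induction as) (simp_all add: algebra_simps)

lemma cf_eval_snoc: "cf_eval x (as @ [a]) = cf_eval x as + x ^ length as * of_int a"
  by (induction as) (simp_all add: algebra_simps)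

lemma cf_eval_replicate_0 [simp]: "cf_eval x (replicate n 0) = 0"
  by (induction n) simp_all

lemma cf_eval_cons [simp]: "cf_eval x (cf_cons a as) = cf_eval x (a # as)"
  by (cases as) simp_all

lemma cf_eval_strip [simp]: "cf_eval x (cf_strip as) = cf_eval x as"
  by (induction as) auto

lemma length_cf_times_x:
  "r \<noteq> [] \<Longrightarrow> length q = length r \<Longrightarrow> length (cf_times_x r q) = length r"
  by (cases r) (simp_all add: cf_times_x_def)

lemma cf_eval_times_x:
  assumes "length q = length r" and "x ^ length r = cf_eval x r"
  shows "cf_eval x (cf_times_x r q) = x * cf_eval x q"
proof -
  have "cf_eval x (0 # q) = cf_eval x (butlast (0 # q) @ [last (0 # q)])"
    by (metis append_butlast_last_id list.distinct(1))
  also have "\<dots> = cf_eval x (butlast (0 # q)) + x ^ length r * of_int (last (0 # q))"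
    using assms(1) by (simp only: cf_eval_snoc length_butlast) simp
  finally show ?thesis using assms by (simp add: cf_times_x_def algebra_simps)
qed

lemma length_cf_reduce: "r \<noteq> [] \<Longrightarrow> length (cf_reduce r as) = length r"
  by (induction as) (simp_all add: length_cf_times_x max_def Suc_leI)

lemma cf_eval_reduce:
  "r \<noteq> [] \<Longrightarrow> x ^ length r = cf_eval x r \<Longrightarrow> cf_eval x (cf_reduce r as) = cf_eval x as"
  by (induction as) (simp_all add: cf_eval_times_x length_cf_reduce)

text \<open>A pair \<open>(a, b)\<close> stands for \<open>a(x) + s b(x)\<close>, computed modulo \<open>x\<^sup>n = r(x)\<close> and
  \<open>s\<^sup>2 = s + 1\<close>.\<close>

type_synonym cyc_num = "int list \<times> int list"

definition cyc_eval :: "complex \<Rightarrow> complex \<Rightarrow> cyc_num \<Rightarrow> complex" where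
  "cyc_eval x s a = cf_eval x (fst a) + s * cf_eval x (snd a)"

definition cyc_zero :: cyc_num where
  "cyc_zero = ([], [])"

definition cyc_one :: cyc_num where
  "cyc_one = ([1], [])"

definition cyc_add :: "cyc_num \<Rightarrow> cyc_num \<Rightarrow> cyc_num" where
  "cyc_add a b = (cf_strip (cf_add (fst a) (fst b)), cf_strip (cf_add (snd a) (snd b)))"

definition cyc_neg :: "cyc_num \<Rightarrow> cyc_num" where
  "cyc_neg a = (map uminus (fst a), map uminus (snd a))"

definition cyc_mult :: "int list \<Rightarrow> cyc_num \<Rightarrow> cyc_num \<Rightarrow> cyc_num" where
  "cyc_mult r a b =
     (let bd = cf_mult (snd a) (snd b)
      in (cf_normalize r (cf_add (cf_mult (fst a) (fst b)) bd),
          cf_normalize r (cf_add (cf_add (cf_mult (fst a) (snd b)) (cf_mult (snd a) (fst b))) bd)))"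

definition cyc_xpow :: "int list \<Rightarrow> nat \<Rightarrow> cyc_num" where
  "cyc_xpow r k = (cf_normalize r (replicate k 0 @ [1]), [])"

lemma cyc_eval_zero [simp]: "cyc_eval x s cyc_zero = 0"
  by (simp add: cyc_eval_def cyc_zero_def)

lemma cyc_eval_one [simp]: "cyc_eval x s cyc_one = 1"
  by (simp add: cyc_eval_def cyc_one_def)

lemma cyc_eval_add [simp]: "cyc_eval x s (cyc_add a b) = cyc_eval x s a + cyc_eval x s b"
  by (simp add: cyc_eval_def cyc_add_def algebra_simps)

lemma cyc_eval_neg [simp]: "cyc_eval x s (cyc_neg a) = - cyc_eval x s a"
  by (simp add: cyc_eval_def cyc_neg_def)

locale cyclotomic_reduction =
  fixes r :: "int list" and x s :: complex
  assumes r_nonempty: "r \<noteq> []"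
    and x_root: "x ^ length r = cf_eval x r"
    and s_golden: "s\<^sup>2 = s + 1"
begin

lemma cf_eval_normalize [simp]: "cf_eval x (cf_normalize r as) = cf_eval x as"
  by (simp add: cf_normalize_def cf_eval_reduce r_nonempty x_root)

lemma cyc_eval_mult [simp]: "cyc_eval x s (cyc_mult r a b) = cyc_eval x s a * cyc_eval x s b"
proof -
  have golden: "(a + s * b) * (c + s * d) = (a * c + b * d) + s * (a * d + b * c + b * d)"
    for a b c d :: complex
  proof -
    have "(a + s * b) * (c + s * d) = a * c + s * (a * d + b * c) + s\<^sup>2 * (b * d)"
      by (simp add: algebra_simps power2_eq_square)
    then show ?thesis by (simp add: s_golden algebra_simps)
  qed
  show ?thesis
    by (simp add: cyc_eval_def cyc_mult_def Let_def golden)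
qed

lemma cyc_eval_xpow [simp]: "cyc_eval x s (cyc_xpow r k) = x ^ k"
  by (simp add: cyc_xpow_def cyc_eval_def cf_eval_snoc)

end

datatype cyc_mat = CM cyc_num cyc_num cyc_num cyc_num cyc_num cyc_num cyc_num cyc_num cyc_num

fun cyc_mat_eval :: "complex \<Rightarrow> complex \<Rightarrow> cyc_mat \<Rightarrow> cmat" where
  "cyc_mat_eval x s (CM a b c d e f g h k) =
     mat3 (cyc_eval x s a) (cyc_eval x s b) (cyc_eval x s c)
          (cyc_eval x s d) (cyc_eval x s e) (cyc_eval x s f)
          (cyc_eval x s g) (cyc_eval x s h) (cyc_eval x s k)"

definition cyc_dot3 ::
  "int list \<Rightarrow> cyc_num \<Rightarrow> cyc_num \<Rightarrow> cyc_num \<Rightarrow> cyc_num \<Rightarrow> cyc_num \<Rightarrow> cyc_num \<Rightarrow> cyc_num" where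
  "cyc_dot3 r a b c d e f = cyc_add (cyc_add (cyc_mult r a d) (cyc_mult r b e)) (cyc_mult r c f)"

fun cyc_mat_mult :: "int list \<Rightarrow> cyc_mat \<Rightarrow> cyc_mat \<Rightarrow> cyc_mat" where
  "cyc_mat_mult r (CM a11 a12 a13 a21 a22 a23 a31 a32 a33) (CM b11 b12 b13 b21 b22 b23 b31 b32 b33) =
    CM (cyc_dot3 r a11 a12 a13 b11 b21 b31) (cyc_dot3 r a11 a12 a13 b12 b22 b32) (cyc_dot3 r a11 a12 a13 b13 b23 b33)
       (cyc_dot3 r a21 a22 a23 b11 b21 b31) (cyc_dot3 r a21 a22 a23 b12 b22 b32) (cyc_dot3 r a21 a22 a23 b13 b23 b33)
       (cyc_dot3 r a31 a32 a33 b11 b21 b31) (cyc_dot3 r a31 a32 a33 b12 b22 b32) (cyc_dot3 r a31 a32 a33 b13 b23 b33)"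

definition cyc_mat_one :: cyc_mat where
  "cyc_mat_one = CM cyc_one cyc_zero cyc_zero cyc_zero cyc_one cyc_zero cyc_zero cyc_zero cyc_one"

definition cyc_mat_scalar :: "cyc_num \<Rightarrow> cyc_mat" where
  "cyc_mat_scalar c = CM c cyc_zero cyc_zero cyc_zero c cyc_zero cyc_zero cyc_zero c"

lemma cyc_mat_eval_one [simp]: "cyc_mat_eval x s cyc_mat_one = mat 1"
  by (simp add: cyc_mat_one_def mat_eq_mat3)

lemma cyc_mat_eval_scalar [simp]: "cyc_mat_eval x s (cyc_mat_scalar c) = mat (cyc_eval x s c)"
  by (simp add: cyc_mat_scalar_def mat_eq_mat3)

lemma (in cyclotomic_reduction) cyc_mat_eval_mult [simp]:
  "cyc_mat_eval x s (cyc_mat_mult r A B) = cyc_mat_eval x s A ** cyc_mat_eval x s B"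
  by (cases A; cases B) (simp add: mat3_mult cyc_dot3_def)

fun cyc_mat_pow :: "int list \<Rightarrow> cyc_mat \<Rightarrow> nat \<Rightarrow> cyc_mat" where
  "cyc_mat_pow r M 0 = cyc_mat_one"
| "cyc_mat_pow r M (Suc n) = cyc_mat_mult r M (cyc_mat_pow r M n)"

lemma (in cyclotomic_reduction) cyc_mat_eval_pow [simp]:
  "cyc_mat_eval x s (cyc_mat_pow r M n) = mpow (cyc_mat_eval x s M) n"
  by (induction n) simp_all

section \<open>Certified factorisations of J\<close>

text \<open>These are \<open>R1 p \<sigma>\<^sub>1\<^sub>0\<close> and its inverse for \<open>N = 3p\<close>, using \<open>cnj u = u\<^bsup>N-1\<^esup>\<close> and
  that \<open>\<sigma>\<^sub>1\<^sub>0\<close> is real.\<close>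

definition R1_rep :: "int list \<Rightarrow> nat \<Rightarrow> cyc_num \<Rightarrow> cyc_mat" where
  "R1_rep r N t =
     CM (cyc_xpow r 2) t (cyc_neg (cyc_mult r (cyc_xpow r 1) t))
        cyc_zero (cyc_xpow r (N - 1)) cyc_zero
        cyc_zero cyc_zero (cyc_xpow r (N - 1))"

definition R1_inv_rep :: "int list \<Rightarrow> nat \<Rightarrow> cyc_num \<Rightarrow> cyc_mat" where
  "R1_inv_rep r N t =
     CM (cyc_xpow r (N - 2)) (cyc_neg (cyc_mult r (cyc_xpow r (N - 1)) t)) t
        cyc_zero (cyc_xpow r 1) cyc_zero
        cyc_zero cyc_zero (cyc_xpow r 1)"

definition Jm_rep :: cyc_mat where
  "Jm_rep = CM cyc_zero cyc_zero cyc_one cyc_one cyc_zero cyc_zero cyc_zero cyc_one cyc_zero"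

definition Jm_inv_rep :: cyc_mat where
  "Jm_inv_rep = CM cyc_zero cyc_one cyc_zero cyc_zero cyc_zero cyc_one cyc_one cyc_zero cyc_zero"

fun letter_rep :: "int list \<Rightarrow> nat \<Rightarrow> cyc_num \<Rightarrow> letter \<Rightarrow> cyc_mat" where
  "letter_rep r N t LR1 = R1_rep r N t"
| "letter_rep r N t LR1_inv = R1_inv_rep r N t"
| "letter_rep r N t LJ = Jm_rep"
| "letter_rep r N t LJ_inv = Jm_inv_rep"

definition word_rep :: "int list \<Rightarrow> nat \<Rightarrow> cyc_num \<Rightarrow> letter list \<Rightarrow> cyc_mat" where
  "word_rep r N t w = foldr (\<lambda>l M. cyc_mat_mult r (letter_rep r N t l) M) w cyc_mat_one"

definition cyc_mat_commute :: "int list \<Rightarrow> cyc_mat \<Rightarrow> cyc_mat \<Rightarrow> bool" where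
  "cyc_mat_commute r M M' \<longleftrightarrow> cyc_mat_mult r M M' = cyc_mat_mult r M' M"

definition mirror_certificate ::
  "int list \<Rightarrow> nat \<Rightarrow> cyc_num \<Rightarrow> letter list \<Rightarrow> nat \<Rightarrow> nat \<Rightarrow> letter list list \<Rightarrow> bool" where
  "mirror_certificate r N t wB n k ws \<longleftrightarrow>
     (let rep = word_rep r N t; A = cyc_mat_pow r (rep wB) n; R = rep [LR1] in
      rep [LJ] = cyc_mat_mult r (cyc_mat_scalar (cyc_xpow r k)) (rep (concat ws)) \<and>
      list_all (\<lambda>w. cyc_mat_commute r (rep w) R \<or> cyc_mat_commute r (rep w) A) ws)"

locale cyclotomic_model = cyclotomic_reduction r "uu p" sigma10 for r :: "int list" and p :: nat +
  fixes sigma_rep :: cyc_num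
  assumes p_pos: "0 < p"
    and sigma_rep_eval: "cyc_eval (uu p) sigma10 sigma_rep = sigma10"
begin

lemma letter_rep_eval:
  "cyc_mat_eval (uu p) sigma10 (letter_rep r (3 * p) sigma_rep l) = letter_mat (R1 p sigma10) Jm l"
proof -
  have cnj_uu: "cnj (uu p) = uu p ^ (3 * p - 1)"
    using cnj_uu_pow[OF p_pos, of 1] p_pos by simp
  have cnj_uu_sq: "cnj (uu p) ^ 2 = uu p ^ (3 * p - 2)"
    using cnj_uu_pow[OF p_pos, of 2] p_pos by simp
  show ?thesis
  proof (cases l)
    case LR1
    then show ?thesis
      by (simp add: R1_rep_def R1_def sigma_rep_eval cnj_uu mult.commute)
  next
    case LR1_inv
    then show ?thesis
      by (simp only: letter_rep.simps letter_mat.simps matrix_inv_R1 cnj_uu_sq)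
        (simp add: R1_inv_rep_def sigma_rep_eval cnj_uu mult.commute)
  next
    case LJ
    then show ?thesis by (simp add: Jm_rep_def Jm_def)
  next
    case LJ_inv
    then show ?thesis
      by (simp only: letter_rep.simps letter_mat.simps matrix_inv_Jm)
        (simp add: Jm_inv_rep_def Jm_def mat3_mult)
  qed
qed

lemma word_rep_eval:
  "cyc_mat_eval (uu p) sigma10 (word_rep r (3 * p) sigma_rep w) = word_mat (R1 p sigma10) Jm w"
  by (induction w) (simp_all add: word_rep_def letter_rep_eval)

lemma mirror_certificate_sound:
  assumes "mirror_certificate r (3 * p) sigma_rep wB n k ws"
  defines "\<Gamma> \<equiv> gen_group {R1 p sigma10, Jm}" and "H \<equiv> Hmat p sigma10"
    and "A \<equiv> mpow (word_mat (R1 p sigma10) Jm wB) n"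
  shows "proj_generates \<Gamma> (Stab \<Gamma> (mirror H (R1 p sigma10)) \<union> Stab \<Gamma> (mirror H A))"
proof -
  let ?w = "word_mat (R1 p sigma10) Jm"
  let ?eval = "cyc_mat_eval (uu p) sigma10"
  let ?rep = "word_rep r (3 * p) sigma_rep"
  have commute: "?eval M ** ?eval M' = ?eval M' ** ?eval M" if "cyc_mat_commute r M M'" for M M'
    using arg_cong[OF that[unfolded cyc_mat_commute_def], of ?eval] by simp
  have "Jm = mat (uu p ^ k) ** ?w (concat ws)"
    using arg_cong[OF conjunct1[OF assms(1)[unfolded mirror_certificate_def Let_def]], of ?eval]
    by (simp add: word_rep_eval)
  moreover have "?w w ** R1 p sigma10 = R1 p sigma10 ** ?w w \<or> ?w w ** A = A ** ?w w"
    if "w \<in> set ws" for w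
  proof -
    have "cyc_mat_commute r (?rep w) (?rep [LR1]) \<or>
        cyc_mat_commute r (?rep w) (cyc_mat_pow r (?rep wB) n)"
      using that assms(1) by (auto simp: mirror_certificate_def Let_def list_all_iff)
    then show ?thesis
    proof
      assume "cyc_mat_commute r (?rep w) (?rep [LR1])"
      from commute[OF this] show ?thesis by (simp add: word_rep_eval)
    next
      assume "cyc_mat_commute r (?rep w) (cyc_mat_pow r (?rep wB) n)"
      from commute[OF this] show ?thesis by (simp add: word_rep_eval A_def)
    qed
  qed
  ultimately show ?thesis
    unfolding \<Gamma>_def H_def
    by (intro proj_generates_by_commuting_words[where c = "uu p ^ k"]
        R1_in_unitary_group Jm_in_unitary_group matrix_inv_Jm) simp_all
qed

end

lemma R2_eq_word: "R2 p \<tau> = word_mat (R1 p \<tau>) Jm [LJ, LR1, LJ_inv]"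
  by (simp add: R2_def matrix_mul_assoc)

lemma R3_eq_word: "R3 p \<tau> = word_mat (R1 p \<tau>) Jm [LJ, LJ, LR1, LJ_inv, LJ_inv]"
  by (simp add: R3_def R2_def matrix_mul_assoc)

lemma matrix_inv_R2_eq_word: "matrix_inv (R2 p \<tau>) = word_mat (R1 p \<tau>) Jm [LJ, LR1_inv, LJ_inv]"
  by (simp add: R2_def matrix_inv_mult invertible_mult invertible_matrix_inv invertible_R1 invertible_Jm
      matrix_inv_matrix_inv matrix_mul_assoc)

lemma matrix_inv_R3_eq_word:
  "matrix_inv (R3 p \<tau>) = word_mat (R1 p \<tau>) Jm [LJ, LJ, LR1_inv, LJ_inv, LJ_inv]"
  by (simp add: R3_def R2_def matrix_inv_mult invertible_mult invertible_matrix_inv invertible_R1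
      invertible_Jm matrix_inv_matrix_inv matrix_mul_assoc)

definition word_R1_R2 :: "letter list" where
  "word_R1_R2 = [LR1, LJ, LR1, LJ_inv]"

definition word_R1_R3 :: "letter list" where
  "word_R1_R3 = [LR1, LJ, LJ, LR1, LJ_inv, LJ_inv]"

definition word_R1_R2_R3_R2inv :: "letter list" where
  "word_R1_R2_R3_R2inv = [LR1, LJ, LR1, LJ_inv, LJ, LJ, LR1, LJ_inv, LJ_inv, LJ, LR1_inv, LJ_inv]"

definition word_R1_R3inv_R2_R3 :: "letter list" where
  "word_R1_R3inv_R2_R3 =
     [LR1, LJ, LJ, LR1_inv, LJ_inv, LJ_inv, LJ, LR1, LJ_inv, LJ, LJ, LR1, LJ_inv, LJ_inv]"

lemma mirror_generator_words:
  "mpow (R1 p \<tau> ** R2 p \<tau>) n = mpow (word_mat (R1 p \<tau>) Jm word_R1_R2) n"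
  "mpow (R1 p \<tau> ** R3 p \<tau>) n = mpow (word_mat (R1 p \<tau>) Jm word_R1_R3) n"
  "mpow (R1 p \<tau> ** R2 p \<tau> ** R3 p \<tau> ** matrix_inv (R2 p \<tau>)) n
     = mpow (word_mat (R1 p \<tau>) Jm word_R1_R2_R3_R2inv) n"
  "mpow (R1 p \<tau> ** matrix_inv (R3 p \<tau>) ** R2 p \<tau> ** R3 p \<tau>) n
     = mpow (word_mat (R1 p \<tau>) Jm word_R1_R3inv_R2_R3) n"
  by (simp_all only: matrix_inv_R2_eq_word matrix_inv_R3_eq_word)
    (simp_all add: R2_eq_word R3_eq_word word_R1_R2_def word_R1_R3_def word_R1_R2_R3_R2inv_def
      word_R1_R3inv_R2_R3_def matrix_mul_assoc)

definition J_factors_R1_R2 :: "letter list list" where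
  "J_factors_R1_R2 =
     [word_R1_R2, word_R1_R2, [LJ, LR1_inv, LJ_inv, LR1_inv, LJ, LR1_inv, LJ_inv, LR1_inv, LJ]]"

definition J_factors_R1_R3 :: "letter list list" where
  "J_factors_R1_R3 =
    (let D = [LJ_inv, LR1_inv, LJ, LR1_inv, LJ_inv, LR1_inv, LJ, LR1_inv, LJ_inv]
     in [word_R1_R3, word_R1_R3, D, word_R1_R3, word_R1_R3, D])"

text \<open>For the last two mirrors the factorisation of \<open>J\<close> holds up to the scalar
  \<open>u\<^sup>1\<^sup>0 = e\<^bsup>2\<pi>i/3\<^esup>\<close>, \<open>u = uu 10\<close>.\<close>

definition J_factors_R1_R2_R3_R2inv :: "letter list list" where
  "J_factors_R1_R2_R3_R2inv =
     [[LJ, LR1, LJ, LR1, LJ_inv, LR1, LJ, LR1_inv, LJ_inv, LR1_inv, LJ_inv],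
      [LJ, LR1, LJ, LR1, LJ_inv, LR1_inv, LJ_inv],
      [LJ, LR1_inv, LJ_inv, LR1_inv, LJ_inv, LR1_inv, LJ, LR1, LJ, LR1, LJ_inv],
      [LR1, LR1, LJ, LR1, LJ, LR1_inv, LJ_inv, LR1_inv, LJ_inv, LR1_inv, LR1_inv]]"

definition J_factors_R1_R3inv_R2_R3 :: "letter list list" where
  "J_factors_R1_R3inv_R2_R3 =
     [[LJ_inv, LR1_inv, LJ_inv, LR1, LJ, LR1, LJ],
      [LJ, LR1, LJ, LR1, LJ_inv, LR1, LJ, LR1_inv, LJ_inv, LR1_inv, LJ_inv],
      [LR1_inv, LJ_inv, LR1_inv, LJ_inv, LR1_inv, LJ, LR1, LJ, LR1],
      [LJ, LR1_inv, LJ_inv, LR1_inv, LJ_inv, LR1_inv, LJ, LR1, LJ, LR1, LJ_inv]]"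

text \<open>\<open>x\<^sup>n = r(x)\<close> with these \<open>r\<close> encodes the cyclotomic polynomials \<open>\<Phi>\<^sub>1\<^sub>2\<close>, \<open>\<Phi>\<^sub>1\<^sub>5\<close>,
  \<open>\<Phi>\<^sub>3\<^sub>0\<close>, the minimal polynomials of \<open>uu 4\<close>, \<open>uu 5\<close>, \<open>uu 10\<close>.\<close>

definition reduction_4 :: "int list" where "reduction_4 = [-1, 0, 1, 0]"
definition reduction_5 :: "int list" where "reduction_5 = [-1, 1, 0, -1, 1, -1, 0, 1]"
definition reduction_10 :: "int list" where "reduction_10 = [-1, -1, 0, 1, 1, 1, 0, -1]"

text \<open>For \<open>p = 5, 10\<close>, \<open>\<sigma>\<^sub>1\<^sub>0 = 1 + \<zeta> + \<zeta>\<^sup>4\<close> with \<open>\<zeta> = e\<^bsup>2\<pi>i/5\<^esup>\<close> lies in \<open>\<int>[u]\<close>;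
  for \<open>p = 4\<close> it is kept as the formal golden ratio \<open>s\<close>.\<close>

definition sigma_rep_4 :: cyc_num where "sigma_rep_4 = ([], [1])"
definition sigma_rep_5 :: cyc_num where
  "sigma_rep_5 = cyc_add (cyc_add cyc_one (cyc_xpow reduction_5 3)) (cyc_xpow reduction_5 12)"
definition sigma_rep_10 :: cyc_num where
  "sigma_rep_10 = cyc_add (cyc_add cyc_one (cyc_xpow reduction_10 6)) (cyc_xpow reduction_10 24)"

lemma cyclotomic_reduction_4: "cyclotomic_reduction reduction_4 (uu 4) sigma10"
proof
  let ?x = "uu 4"
  have "(?x^4 - ?x^2 + 1) * ((?x^6 - 1) * (?x^4 - 1)) = (?x^12 - 1) * (?x^2 - 1)"
    by algebra
  then have "?x^4 - ?x^2 + 1 = 0"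
    using uu_pow_order[of 4] uu_pow_neq_1[of 6 4] uu_pow_neq_1[of 4 4] by simp
  then show "?x ^ length reduction_4 = cf_eval ?x reduction_4"
    unfolding reduction_4_def by simp algebra
qed (simp_all add: reduction_4_def sigma10_sq)

lemma cyclotomic_reduction_5: "cyclotomic_reduction reduction_5 (uu 5) sigma10"
proof
  let ?x = "uu 5"
  have "(?x^8 - ?x^7 + ?x^5 - ?x^4 + ?x^3 - ?x + 1) * ((?x^5 - 1) * (?x^3 - 1)) = (?x^15 - 1) * (?x - 1)"
    by algebra
  then have "?x^8 - ?x^7 + ?x^5 - ?x^4 + ?x^3 - ?x + 1 = 0"
    using uu_pow_order[of 5] uu_pow_neq_1[of 5 5] uu_pow_neq_1[of 3 5] by simp
  then show "?x ^ length reduction_5 = cf_eval ?x reduction_5"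
    unfolding reduction_5_def by simp algebra
qed (simp_all add: reduction_5_def sigma10_sq)

lemma cyclotomic_reduction_10: "cyclotomic_reduction reduction_10 (uu 10) sigma10"
proof
  let ?x = "uu 10"
  have "(?x^8 + ?x^7 - ?x^5 - ?x^4 - ?x^3 + ?x + 1) * ((?x^15 - 1) * (?x^10 - 1) * (?x^6 - 1) * (?x - 1))
      = (?x^30 - 1) * (?x^3 - 1) * (?x^5 - 1) * (?x^2 - 1)"
    by algebra
  then have "?x^8 + ?x^7 - ?x^5 - ?x^4 - ?x^3 + ?x + 1 = 0"
    using uu_pow_order[of 10] uu_pow_neq_1[of 15 10] uu_pow_neq_1[of 10 10] uu_pow_neq_1[of 6 10]
      uu_pow_neq_1[of 1 10] by simp
  then show "?x ^ length reduction_10 = cf_eval ?x reduction_10"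
    unfolding reduction_10_def by simp algebra
qed (simp_all add: reduction_10_def sigma10_sq)

lemma cyclotomic_model_4: "cyclotomic_model reduction_4 4 sigma_rep_4"
  using cyclotomic_reduction_4
  by (simp add: cyclotomic_model_def cyclotomic_model_axioms_def sigma_rep_4_def cyc_eval_def)

lemma cyclotomic_model_5: "cyclotomic_model reduction_5 5 sigma_rep_5"
  using cyclotomic_reduction_5 sigma10_eq_uu_sum[of 3 5]
  by (simp add: cyclotomic_model_def cyclotomic_model_axioms_def sigma_rep_5_def cyclotomic_reduction.cyc_eval_xpow)

lemma cyclotomic_model_10: "cyclotomic_model reduction_10 10 sigma_rep_10"
  using cyclotomic_reduction_10 sigma10_eq_uu_sum[of 6 10]
  by (simp add: cyclotomic_model_def cyclotomic_model_axioms_def sigma_rep_10_def cyclotomic_reduction.cyc_eval_xpow)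

lemma certificates_4:
  "mirror_certificate reduction_4 (3 * 4) sigma_rep_4 word_R1_R2 5 0 J_factors_R1_R2"
  "mirror_certificate reduction_4 (3 * 4) sigma_rep_4 word_R1_R3 5 0 J_factors_R1_R3"
  by code_simp+

lemma certificates_5:
  "mirror_certificate reduction_5 (3 * 5) sigma_rep_5 word_R1_R2 5 0 J_factors_R1_R2"
  "mirror_certificate reduction_5 (3 * 5) sigma_rep_5 word_R1_R3 5 0 J_factors_R1_R3"
  by code_simp+

lemma certificates_10:
  "mirror_certificate reduction_10 (3 * 10) sigma_rep_10 word_R1_R2 5 0 J_factors_R1_R2"
  "mirror_certificate reduction_10 (3 * 10) sigma_rep_10 word_R1_R3 5 0 J_factors_R1_R3"
  "mirror_certificate reduction_10 (3 * 10) sigma_rep_10 word_R1_R2_R3_R2inv 3 10 J_factors_R1_R2_R3_R2inv"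
  "mirror_certificate reduction_10 (3 * 10) sigma_rep_10 word_R1_R3inv_R2_R3 3 10 J_factors_R1_R3inv_R2_R3"
  by code_simp+

theorem theorem11p3:
  fixes p :: nat
  assumes "p \<in> {4, 5, 10}"
  defines "\<Gamma> \<equiv> gen_group {R1 p sigma10, Jm}"
    and "H \<equiv> Hmat p sigma10"
    and "r1 \<equiv> R1 p sigma10" and "r2 \<equiv> R2 p sigma10" and "r3 \<equiv> R3 p sigma10"
  shows "(\<forall>A \<in> {mpow (r1 ** r2) 5, mpow (r1 ** r3) 5}.
            proj_generates \<Gamma> (Stab \<Gamma> (mirror H r1) \<union> Stab \<Gamma> (mirror H A)))
       \<and> (p = 10 \<longrightarrow>
          (\<forall>A \<in> {mpow (r1 ** r2 ** r3 ** matrix_inv r2) 3,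
                  mpow (r1 ** matrix_inv r3 ** r2 ** r3) 3}.
            proj_generates \<Gamma> (Stab \<Gamma> (mirror H r1) \<union> Stab \<Gamma> (mirror H A))))"
proof -
  from assms(1) consider "p = 4" | "p = 5" | "p = 10" by blast
  then show ?thesis
  proof cases
    case 1
    show ?thesis
      unfolding \<Gamma>_def H_def r1_def r2_def r3_def mirror_generator_words 1
      using certificates_4[THEN cyclotomic_model.mirror_certificate_sound[OF cyclotomic_model_4]]
      by simp
  next
    case 2
    show ?thesis
      unfolding \<Gamma>_def H_def r1_def r2_def r3_def mirror_generator_words 2
      using certificates_5[THEN cyclotomic_model.mirror_certificate_sound[OF cyclotomic_model_5]]
      by simp
  next
    case 3
    show ?thesis
      unfolding \<Gamma>_def H_def r1_def r2_def r3_def mirror_generator_words 3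
      using certificates_10[THEN cyclotomic_model.mirror_certificate_sound[OF cyclotomic_model_10]]
      by simp
  qed
qed

end
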